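(* If $T$ is a tree with $n$ vertices that contains a perfect matching and has maximum degree $\Delta(T)=3$, then $\nu_{2}(T) \geq \frac{3n-2}{4}$.
   Context: $\nu_2(T)$ is the maximum number of edges of a $2$-edge-colorable subgraph of $T$, i.e. the maximum total size of two edge-disjoint matchings of $T$. *)

theory Defs
  imports Complex_Main
begin

definition simple_graph :: "'a set \<Rightarrow> 'a set set \<Rightarrow> bool" where
  "simple_graph V E \<longleftrightarrow> finite V \<and> (\<forall>e\<in>E. e \<subseteq> V \<and> card e = 2)"

definition adjacent :: "'a set set \<Rightarrow> 'a \<Rightarrow> 'a \<Rightarrow> bool" where
  "adjacent E u v \<longleftrightarrow> {u, v} \<in> E"

definition connected_graph :: "'a set \<Rightarrow> 'a set set \<Rightarrow> bool" where
  "connected_graph V E \<longleftrightarrow> V \<noteq> {} \<and>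
     (\<forall>u\<in>V. \<forall>v\<in>V. (u, v) \<in> {(x, y). adjacent E x y}\<^sup>*)"

definition is_cycle :: "'a set set \<Rightarrow> 'a list \<Rightarrow> bool" where
  "is_cycle E cs \<longleftrightarrow> length cs \<ge> 3 \<and> distinct cs \<and>
     (\<forall>i. Suc i < length cs \<longrightarrow> adjacent E (cs ! i) (cs ! Suc i)) \<and>
     adjacent E (last cs) (hd cs)"

definition acyclic_graph :: "'a set set \<Rightarrow> bool" where
  "acyclic_graph E \<longleftrightarrow> \<not> (\<exists>cs. is_cycle E cs)"

definition is_tree :: "'a set \<Rightarrow> 'a set set \<Rightarrow> bool" where
  "is_tree V E \<longleftrightarrow> simple_graph V E \<and> connected_graph V E \<and> acyclic_graph E"

definition is_matching :: "'a set set \<Rightarrow> 'a set set \<Rightarrow> bool" where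
  "is_matching E M \<longleftrightarrow> M \<subseteq> E \<and> (\<forall>e1\<in>M. \<forall>e2\<in>M. e1 \<noteq> e2 \<longrightarrow> e1 \<inter> e2 = {})"

definition perfect_matching :: "'a set \<Rightarrow> 'a set set \<Rightarrow> 'a set set \<Rightarrow> bool" where
  "perfect_matching V E M \<longleftrightarrow> is_matching E M \<and> \<Union>M = V"

definition degree :: "'a set set \<Rightarrow> 'a \<Rightarrow> nat" where
  "degree E v = card {e \<in> E. v \<in> e}"

definition max_degree :: "'a set \<Rightarrow> 'a set set \<Rightarrow> nat" where
  "max_degree V E = Max (degree E ` V)"

definition nu2 :: "'a set set \<Rightarrow> nat" where
  "nu2 E = Max {card (M1 \<union> M2) | M1 M2.
      is_matching E M1 \<and> is_matching E M2 \<and> M1 \<inter> M2 = {}}"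

end

theory Submission
  imports Defs
begin

text \<open>Removing the perfect matching M from T leaves a forest of maximum degree 2, i.e.\ a
  disjoint union of paths; every path, hence this forest, has a matching M' containing at least
  half of its edges. Since T has at least n - 1 edges and M has n/2 of them, M and M' are two
  disjoint matchings with |M| + |M'| \<ge> n/2 + (n/2 - 1)/2 = (3n - 2)/4 edges.\<close>

lemma simple_graph_finite_edges: "simple_graph V E \<Longrightarrow> finite E"
  unfolding simple_graph_def by (meson Pow_iff finite_Pow_iff finite_subset subsetI)

definition is_path :: "'a set set \<Rightarrow> 'a list \<Rightarrow> bool" where
  "is_path E ps \<longleftrightarrow> distinct ps \<and> (\<forall>i. Suc i < length ps \<longrightarrow> adjacent E (ps ! i) (ps ! Suc i))"

lemma is_cycle_mono: "is_cycle F cs \<Longrightarrow> F \<subseteq> G \<Longrightarrow> is_cycle G cs"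
  unfolding is_cycle_def adjacent_def by blast

lemma acyclic_graph_subset: "acyclic_graph G \<Longrightarrow> F \<subseteq> G \<Longrightarrow> acyclic_graph F"
  unfolding acyclic_graph_def using is_cycle_mono by blast

lemma is_path_Cons:
  assumes "is_path E (x # ps)" "z \<notin> set (x # ps)" "{z, x} \<in> E"
  shows "is_path E (z # x # ps)"
  unfolding is_path_def
proof (intro conjI allI impI)
  show "distinct (z # x # ps)" using assms(1,2) unfolding is_path_def by simp
  fix i assume i: "Suc i < length (z # x # ps)"
  show "adjacent E ((z # x # ps) ! i) ((z # x # ps) ! Suc i)"
  proof (cases i)
    case 0
    then show ?thesis using assms(3) unfolding adjacent_def by simp
  next
    case (Suc j)
    then show ?thesis using assms(1) i unfolding is_path_def by simp
  qed
qed

lemma is_cycle_take: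
  assumes "is_path E ps" "2 \<le> j" "j < length ps" "{ps ! j, hd ps} \<in> E"
  shows "is_cycle E (take (Suc j) ps)"
  unfolding is_cycle_def
proof (intro conjI allI impI)
  let ?cs = "take (Suc j) ps"
  show "3 \<le> length ?cs" "distinct ?cs" using assms(1-3) unfolding is_path_def by auto
  fix i assume "Suc i < length ?cs"
  then show "adjacent E (?cs ! i) (?cs ! Suc i)" using assms(1) unfolding is_path_def by simp
next
  have "last (take (Suc j) ps) = ps ! j" using assms(3) by (subst last_conv_nth) auto
  moreover have "hd (take (Suc j) ps) = hd ps" using assms(3) by simp
  ultimately show "adjacent E (last (take (Suc j) ps)) (hd (take (Suc j) ps))"
    using assms(4) unfolding adjacent_def by simp
qed

lemma is_path_vertices:
  assumes "is_path E ps" "2 \<le> length ps"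
  shows "set ps \<subseteq> \<Union>E"
proof
  fix v assume "v \<in> set ps"
  then obtain i where i: "i < length ps" "ps ! i = v" by (auto simp: in_set_conv_nth)
  show "v \<in> \<Union>E"
  proof (cases "Suc i < length ps")
    case True
    then show ?thesis using assms(1) i unfolding is_path_def adjacent_def by blast
  next
    case False
    then have "Suc (i - 1) < length ps" "Suc (i - 1) = i" using i(1) assms(2) by auto
    then have "{ps ! (i - 1), v} \<in> E" using assms(1) i(2) unfolding is_path_def adjacent_def by metis
    then show ?thesis by blast
  qed
qed

lemma is_path_longest:
  assumes fin: "finite (\<Union>E)" and "is_path E ps\<^sub>0" "2 \<le> length ps\<^sub>0"
  shows "\<exists>ps. is_path E ps \<and> 2 \<le> length ps \<and>
    (\<forall>qs. is_path E qs \<longrightarrow> 2 \<le> length qs \<longrightarrow> length qs \<le> length ps)"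
proof -
  define long_path where "long_path k \<longleftrightarrow> (\<exists>ps. is_path E ps \<and> 2 \<le> length ps \<and> length ps = k)"
    for k
  have "long_path (length ps\<^sub>0)" using assms(2,3) unfolding long_path_def by blast
  moreover have "\<forall>k. long_path k \<longrightarrow> k \<le> card (\<Union>E)"
  proof (intro allI impI)
    fix k assume "long_path k"
    then obtain ps where ps: "is_path E ps" "2 \<le> length ps" "length ps = k"
      unfolding long_path_def by blast
    have "set ps \<subseteq> \<Union>E" by (rule is_path_vertices[OF ps(1,2)])
    then have "card (set ps) \<le> card (\<Union>E)" by (rule card_mono[OF fin])
    moreover have "card (set ps) = k" using ps(1,3) unfolding is_path_def by (simp add: distinct_card)
    ultimately show "k \<le> card (\<Union>E)" by simp
  qed
  ultimately obtain k where "long_path k" and "\<forall>k'. long_path k' \<longrightarrow> k' \<le> k"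
    using Nat.ex_has_greatest_nat by blast
  then show ?thesis unfolding long_path_def by blast
qed

lemma acyclic_graph_has_leaf:
  assumes fin: "finite E" and two: "\<forall>e\<in>E. card e = 2" and ne: "E \<noteq> {}"
    and acyc: "acyclic_graph E"
  shows "\<exists>x y. {x, y} \<in> E \<and> x \<noteq> y \<and> (\<forall>e\<in>E. x \<in> e \<longrightarrow> e = {x, y})"
proof -
  have fin_vertices: "finite (\<Union>E)" using fin two by (metis card.infinite finite_Union zero_neq_numeral)
  obtain e0 where "e0 \<in> E" using ne by blast
  then obtain a b where ab: "{a, b} \<in> E" "a \<noteq> b" using two by (metis card_2_iff)
  have "is_path E [a, b]" using ab unfolding is_path_def adjacent_def by (simp add: less_2_cases_iff)
  from is_path_longest[OF fin_vertices this] obtain ps where ps: "is_path E ps" "2 \<le> length ps"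
    and longest: "\<forall>qs. is_path E qs \<longrightarrow> 2 \<le> length qs \<longrightarrow> length qs \<le> length ps"
    by auto
  obtain x y rest where xyr: "ps = x # y # rest"
    by (metis One_nat_def Suc_1 Suc_le_length_iff ps(2))
  have "adjacent E (ps ! 0) (ps ! Suc 0)" using ps(1,2) unfolding is_path_def by simp
  then have xy: "{x, y} \<in> E" "x \<noteq> y" using ps(1) xyr unfolding is_path_def adjacent_def by auto
  have "e = {x, y}" if e: "e \<in> E" "x \<in> e" for e
  proof -
    obtain z where z: "e = {x, z}" "z \<noteq> x" using two e by (metis card_2_iff insert_commute insertE singletonD)
    have "z = y"
    proof (rule ccontr)
      assume "z \<noteq> y"
      show False
      proof (cases "z \<in> set ps")
        case False
        then have "is_path E (z # ps)" using is_path_Cons[of E x "y # rest" z] ps(1) xyr e z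
          by (simp add: insert_commute)
        then show False using longest ps(2) by fastforce
      next
        case True
        then obtain j where j: "j < length ps" "ps ! j = z" by (auto simp: in_set_conv_nth)
        have "j \<noteq> 0" using j(2) xyr z(2) by (metis nth_Cons_0)
        moreover have "j \<noteq> 1" using j(2) xyr \<open>z \<noteq> y\<close> by (metis One_nat_def nth_Cons_0 nth_Cons_Suc)
        ultimately have "2 \<le> j" by linarith
        then have "is_cycle E (take (Suc j) ps)"
          using is_cycle_take[OF ps(1)] j e z xyr by (simp add: insert_commute)
        then show False using acyc unfolding acyclic_graph_def by blast
      qed
    qed
    then show ?thesis using z by simp
  qed
  then show ?thesis using xy by blast
qed

lemma is_matching_mono: "is_matching F M \<Longrightarrow> F \<subseteq> E \<Longrightarrow> is_matching E M"
  unfolding is_matching_def by blast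

lemma is_matching_insert:
  assumes "is_matching E M" "e \<in> E" "\<forall>e'\<in>M. e \<inter> e' = {}"
  shows "is_matching E (insert e M)"
  using assms unfolding is_matching_def by (auto simp: Int_commute)

lemma degree_mono:
  assumes "finite E" "F \<subseteq> E"
  shows "degree F v \<le> degree E v"
  unfolding degree_def using assms by (intro card_mono) auto

lemma is_matching_insert_leaf_edge:
  assumes "finite F" "{x, y} \<in> F" "\<forall>e\<in>F. x \<in> e \<longrightarrow> e = {x, y}"
    and M: "is_matching {e \<in> F. y \<notin> e} M"
  shows "is_matching F (insert {x, y} M) \<and> card (insert {x, y} M) = Suc (card M)"
proof -
  have M_F: "M \<subseteq> {e \<in> F. y \<notin> e}" using M unfolding is_matching_def by auto
  have "{x, y} \<inter> e = {}" if "e \<in> M" for e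
  proof -
    have "e \<in> F" "y \<notin> e" using that M_F by auto
    then show ?thesis using assms(3) by auto
  qed
  moreover have "is_matching F M" using M by (rule is_matching_mono) blast
  ultimately have "is_matching F (insert {x, y} M)" using assms(2) by (intro is_matching_insert) auto
  moreover have "finite M" using assms(1) M_F by (auto intro: rev_finite_subset)
  moreover have "{x, y} \<notin> M" using M_F by auto
  ultimately show ?thesis by simp
qed

lemma acyclic_graph_degree_le_2_half_matching:
  assumes "finite F" "\<forall>e\<in>F. card e = 2" "acyclic_graph F" "\<forall>v. degree F v \<le> 2"
  shows "\<exists>M. is_matching F M \<and> card F \<le> 2 * card M"
  using assms
proof (induction "card F" arbitrary: F rule: less_induct)
  case less
  show ?case
  proof (cases "F = {}")
    case True
    then show ?thesis unfolding is_matching_def by auto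
  next
    case False
    obtain x y where xy: "{x, y} \<in> F" and leaf: "\<forall>e\<in>F. x \<in> e \<longrightarrow> e = {x, y}"
      using acyclic_graph_has_leaf[OF less.prems(1,2) False less.prems(3)] by blast
    \<comment> \<open>match the leaf edge and drop the (at most two) edges at y\<close>
    define F' where "F' = {e \<in> F. y \<notin> e}"
    have "F' \<subseteq> F" unfolding F'_def by auto
    have "finite F'" using less.prems(1) \<open>F' \<subseteq> F\<close> by (rule rev_finite_subset)
    have "card F = card (F' \<union> {e \<in> F. y \<in> e})" by (rule arg_cong[where f = card]) (auto simp: F'_def)
    also have "\<dots> = card F' + card {e \<in> F. y \<in> e}"
      using \<open>finite F'\<close> less.prems(1) by (intro card_Un_disjoint) (auto simp: F'_def)
    finally have "card F = card F' + card {e \<in> F. y \<in> e}" .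
    moreover have "card {e \<in> F. y \<in> e} \<le> 2" "0 < card {e \<in> F. y \<in> e}"
      using less.prems(1,4) xy unfolding degree_def by (auto simp: card_gt_0_iff)
    ultimately have card_F': "card F \<le> card F' + 2" "card F' < card F" by linarith+
    have "\<exists>M. is_matching F' M \<and> card F' \<le> 2 * card M"
    proof (rule less.hyps[OF card_F'(2)])
      show "finite F'" by fact
      show "\<forall>e\<in>F'. card e = 2" using less.prems(2) \<open>F' \<subseteq> F\<close> by blast
      show "acyclic_graph F'" using less.prems(3) \<open>F' \<subseteq> F\<close> by (rule acyclic_graph_subset)
      show "\<forall>v. degree F' v \<le> 2"
      proof
        fix v
        show "degree F' v \<le> 2"
          using degree_mono[OF less.prems(1) \<open>F' \<subseteq> F\<close>, of v] less.prems(4) by (meson le_trans)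
      qed
    qed
    then obtain M' where M': "is_matching F' M'" "card F' \<le> 2 * card M'" by blast
    then have "is_matching F (insert {x, y} M') \<and> card (insert {x, y} M') = Suc (card M')"
      using is_matching_insert_leaf_edge[OF less.prems(1) xy leaf] unfolding F'_def by blast
    then show ?thesis using card_F'(1) M'(2) by (intro exI[of _ "insert {x, y} M'"]) simp
  qed
qed

lemma Least_relpow_step:
  fixes R :: "'a rel"
  assumes "(v, r) \<in> R\<^sup>*" "v \<noteq> r"
  shows "\<exists>y. (v, y) \<in> R \<and> Suc (LEAST k. (y, r) \<in> R ^^ k) = (LEAST k. (v, r) \<in> R ^^ k)"
proof -
  define d where "d u = (LEAST k. (u, r) \<in> R ^^ k)" for u
  have dv: "(v, r) \<in> R ^^ d v" unfolding d_def using assms(1) rtrancl_power by (metis LeastI_ex)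
  then have "d v \<noteq> 0" using assms(2) by (metis relpow_0_E)
  then obtain m where m: "d v = Suc m" by (cases "d v") auto
  obtain y where y: "(v, y) \<in> R" "(y, r) \<in> R ^^ m" using relpow_Suc_D2[of v r m R] dv m by auto
  have "d y \<le> m" unfolding d_def using y(2) by (rule Least_le)
  moreover have "(y, r) \<in> R ^^ d y" unfolding d_def using y(2) by (rule LeastI)
  then have "(v, r) \<in> R ^^ Suc (d y)" using y(1) by (rule relpow_Suc_I2[rotated])
  then have "d v \<le> Suc (d y)" unfolding d_def by (rule Least_le)
  ultimately show ?thesis using m y(1) unfolding d_def by (intro exI[of _ y]) simp
qed

text \<open>Every vertex other than a root r is injectively assigned the edge to a neighbour closer to r.\<close>
lemma connected_graph_card_le:
  assumes sg: "simple_graph V E" and conn: "connected_graph V E"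
  shows "card V \<le> card E + 1"
proof -
  obtain r where r: "r \<in> V" using conn unfolding connected_graph_def by auto
  define R where "R = {(x, y). adjacent E x y}"
  define d where "d u = (LEAST k. (u, r) \<in> R ^^ k)" for u
  define f where "f v = {v, SOME y. (v, y) \<in> R \<and> Suc (d y) = d v}" for v
  have f: "\<exists>y. f v = {v, y} \<and> {v, y} \<in> E \<and> Suc (d y) = d v" if v: "v \<in> V - {r}" for v
  proof -
    have "(v, r) \<in> R\<^sup>*" using conn v r unfolding connected_graph_def R_def by blast
    then obtain y where "(v, y) \<in> R \<and> Suc (d y) = d v"
      using Least_relpow_step[of v r R] v unfolding d_def by blast
    then have "(v, SOME y. (v, y) \<in> R \<and> Suc (d y) = d v) \<in> R \<and>
        Suc (d (SOME y. (v, y) \<in> R \<and> Suc (d y) = d v)) = d v"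
      by (rule someI)
    then show ?thesis unfolding f_def R_def adjacent_def by blast
  qed
  have "inj_on f (V - {r})"
  proof (rule inj_onI)
    fix v w assume v: "v \<in> V - {r}" and w: "w \<in> V - {r}" and eq: "f v = f w"
    obtain y where y: "f v = {v, y}" "Suc (d y) = d v" using f[OF v] by blast
    obtain z where z: "f w = {w, z}" "Suc (d z) = d w" using f[OF w] by blast
    have "{v, y} = {w, z}" using eq y(1) z(1) by simp
    then have "v = w \<or> (v = z \<and> y = w)" by (auto simp: doubleton_eq_iff)
    then show "v = w" using y(2) z(2) by auto
  qed
  moreover have "f ` (V - {r}) \<subseteq> E"
  proof (rule image_subsetI)
    fix v assume "v \<in> V - {r}"
    then show "f v \<in> E" using f by force
  qed
  ultimately have "card (V - {r}) \<le> card E"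
    using simple_graph_finite_edges[OF sg] by (rule card_inj_on_le)
  then show ?thesis using r by simp
qed

lemma perfect_matching_card:
  assumes "simple_graph V E" "perfect_matching V E M"
  shows "card V = 2 * card M"
proof -
  have M: "M \<subseteq> E" "\<Union>M = V" "pairwise disjnt M"
    using assms(2) unfolding perfect_matching_def is_matching_def pairwise_def disjnt_def by auto
  have two: "card e = 2" if "e \<in> M" for e using assms(1) M(1) that unfolding simple_graph_def by auto
  then have "finite e" if "e \<in> M" for e using that card.infinite by force
  with M(3) have "card (\<Union>M) = sum card M" by (rule card_Union_disjoint)
  also have "\<dots> = sum (\<lambda>_. 2) M" using two by (rule sum.cong[OF refl])
  finally show ?thesis using M(2) by simp
qed

lemma degree_le_max_degree: "finite V \<Longrightarrow> v \<in> V \<Longrightarrow> degree E v \<le> max_degree V E"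
  unfolding max_degree_def by simp

lemma degree_Diff_perfect_matching:
  assumes "simple_graph V E" "perfect_matching V E M" "max_degree V E \<le> Suc d"
  shows "degree (E - M) v \<le> d"
proof (cases "v \<in> V")
  case True
  have fin: "finite E" "finite V"
    using assms(1) simple_graph_finite_edges unfolding simple_graph_def by blast+
  obtain m where m: "m \<in> M" "v \<in> m" "m \<in> E"
    using assms(2) True unfolding perfect_matching_def is_matching_def by blast
  have "{e \<in> E - M. v \<in> e} \<subseteq> {e \<in> E. v \<in> e} - {m}" using m(1) by blast
  then have "degree (E - M) v \<le> card ({e \<in> E. v \<in> e} - {m})"
    unfolding degree_def using fin(1) by (simp add: card_mono)
  also have "\<dots> = degree E v - 1" unfolding degree_def using m(2,3) by simp
  finally show ?thesis using degree_le_max_degree[OF fin(2) True, of E] assms(3) by linarith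
next
  case False
  then have "{e \<in> E - M. v \<in> e} = {}" using assms(1) unfolding simple_graph_def by blast
  then show ?thesis unfolding degree_def by (simp only: card.empty zero_le)
qed

lemma disjoint_matchings_card_le_nu2:
  assumes "finite E" "is_matching E M1" "is_matching E M2" "M1 \<inter> M2 = {}"
  shows "card M1 + card M2 \<le> nu2 E"
proof -
  let ?S = "{card (N1 \<union> N2) | N1 N2. is_matching E N1 \<and> is_matching E N2 \<and> N1 \<inter> N2 = {}}"
  have "?S \<subseteq> {..card E}"
  proof
    fix k assume "k \<in> ?S"
    then obtain N1 N2 where "k = card (N1 \<union> N2)" "is_matching E N1" "is_matching E N2" by blast
    moreover have "N1 \<union> N2 \<subseteq> E" using calculation(2,3) unfolding is_matching_def by blast
    ultimately show "k \<in> {..card E}" using card_mono[OF assms(1)] by simp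
  qed
  then have "finite ?S" using finite_subset by blast
  moreover have "card (M1 \<union> M2) \<in> ?S" using assms(2-4) by blast
  ultimately have "card (M1 \<union> M2) \<le> nu2 E" unfolding nu2_def by (rule Max_ge)
  moreover have "finite M1" "finite M2"
    using assms(1-3) unfolding is_matching_def by (auto intro: rev_finite_subset)
  ultimately show ?thesis using card_Un_disjoint[OF _ _ assms(4)] by simp
qed

lemma perfect_matching_complement_half_matching:
  assumes sg: "simple_graph V E" and acyc: "acyclic_graph E" and pm: "perfect_matching V E M"
    and deg: "max_degree V E \<le> 3"
  shows "\<exists>M'. is_matching E M' \<and> M \<inter> M' = {} \<and> card E \<le> card M + 2 * card M'"
proof -
  have fin: "finite E" by (rule simple_graph_finite_edges[OF sg])
  have "finite (E - M)" using fin by blast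
  moreover have "\<forall>e\<in>E - M. card e = 2" using sg unfolding simple_graph_def by blast
  moreover have "acyclic_graph (E - M)" using acyc Diff_subset by (rule acyclic_graph_subset)
  moreover have "\<forall>v. degree (E - M) v \<le> 2"
    using degree_Diff_perfect_matching[OF sg pm, of 2] deg by simp
  ultimately obtain M' where M': "is_matching (E - M) M'" "card (E - M) \<le> 2 * card M'"
    using acyclic_graph_degree_le_2_half_matching by blast
  have "M \<subseteq> E" using pm unfolding perfect_matching_def is_matching_def by blast
  then have "card (E - M) = card E - card M" "card M \<le> card E"
    using fin by (simp_all add: card_Diff_subset[OF rev_finite_subset[OF fin]] card_mono)
  moreover have "M \<inter> M' = {}" using M'(1) unfolding is_matching_def by blast
  ultimately show ?thesis using M'(2) is_matching_mono[OF M'(1) Diff_subset] by auto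
qed

theorem corollary2:
  fixes V :: "'a set" and E :: "'a set set"
  assumes "is_tree V E"
    and "\<exists>M. perfect_matching V E M"
    and "max_degree V E = 3"
  shows "real (nu2 E) \<ge> (3 * real (card V) - 2) / 4"
proof -
  have sg: "simple_graph V E" and conn: "connected_graph V E" and acyc: "acyclic_graph E"
    using assms(1) unfolding is_tree_def by auto
  obtain M where pm: "perfect_matching V E M" using assms(2) by blast
  then have M: "is_matching E M" unfolding perfect_matching_def by simp
  obtain M' where M': "is_matching E M'" "M \<inter> M' = {}" "card E \<le> card M + 2 * card M'"
    using perfect_matching_complement_half_matching[OF sg acyc pm] assms(3) by auto
  have "card M + card M' \<le> nu2 E"
    by (rule disjoint_matchings_card_le_nu2[OF simple_graph_finite_edges[OF sg] M M'(1,2)])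
  moreover have "card V = 2 * card M" by (rule perfect_matching_card[OF sg pm])
  moreover have "card V \<le> card E + 1" by (rule connected_graph_card_le[OF sg conn])
  ultimately have "3 * card V \<le> 4 * nu2 E + 2" using M'(3) by linarith
  then show ?thesis by simp
qed

end
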